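(* Let $\Gamma\cong\mathbb{Z}^n$ act freely, properly discontinuously and cocompactly by isometries on a length space $(X,d)$, let $x_0\in X$, and let $D\ge\operatorname{diam}(\Gamma\backslash X)$. Let $\Sigma_D=\{\gamma\in\Gamma\setminus\{e\}: d(\gamma x_0,x_0)\le 3D\}$ (a generating set of $\Gamma$), let $\Sigma_n=\{\gamma_1,\dots,\gamma_n\}\subset\Sigma_D$ be $n$ linearly independent elements, and $\mathcal Z=\langle\Sigma_n\rangle$. Let $S=\{s_0=e,s_1,\dots,s_d\}$ be a set of representatives of the cosets of $\Gamma/\mathcal Z$, each of minimal $d_{\Sigma_D}$-word length in its coset, and let $\widehat\Sigma_n=\{s_i\sigma s_j^{-1}: s_i,s_j\in S,\ \sigma\in\Sigma_D,\ s_i\sigma s_j^{-1}\in\mathcal Z\setminus\{e\}\}$. Then for all $\gamma\in\mathcal Z$, $$|\gamma|_{\widehat\Sigma_n}\le|\gamma|_{\Sigma_D}\le(2[\Gamma:\mathcal Z]+1)\,|\gamma|_{\widehat\Sigma_n}.$$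
   Context: For a generating set $\Sigma$ of a group, $|\gamma|_\Sigma$ denotes the word length of $\gamma$ with respect to $\Sigma$ and $d_\Sigma$ the associated word metric; $|\gamma|_{\widehat\Sigma_n}$ is the word length in $\mathcal Z$ with respect to $\widehat\Sigma_n$ (which generates $\mathcal Z$). *)

theory Defs
  imports "HOL-Analysis.Analysis"
begin

text \<open>The group Gamma = Z^n is modelled as the additive group int ^ 'n (n = CARD('n)).\<close>

definition word_length :: "('a::group_add) set \<Rightarrow> 'a \<Rightarrow> nat" where
  "word_length \<Sigma> g = (LEAST k. \<exists>xs. length xs = k \<and> set xs \<subseteq> \<Sigma> \<union> uminus ` \<Sigma> \<and> sum_list xs = g)"

definition int_lin_indep :: "(int ^ 'n) set \<Rightarrow> bool" where
  "int_lin_indep V \<longleftrightarrow> (\<forall>c. (\<Sum>v\<in>V. c v *s v) = 0 \<longrightarrow> (\<forall>v\<in>V. c v = 0))"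

definition int_span :: "(int ^ 'n) set \<Rightarrow> (int ^ 'n) set" where
  "int_span V = {(\<Sum>v\<in>V. c v *s v) | c. True}"

definition group_index :: "(int ^ 'n) set \<Rightarrow> nat" where
  "group_index Z = card {(\<lambda>z. g + z) ` Z | g. True}"

definition length_space :: "'x::metric_space itself \<Rightarrow> bool" where
  "length_space _ \<longleftrightarrow> (\<forall>x y::'x. \<forall>\<epsilon>>0. \<exists>p::real \<Rightarrow> 'x.
      continuous_on {0..1} p \<and> p 0 = x \<and> p 1 = y \<and>
      (\<forall>ts. sorted ts \<and> set ts \<subseteq> {0..1} \<longrightarrow>
         (\<Sum>i<length ts - 1. dist (p (ts ! i)) (p (ts ! Suc i))) \<le> dist x y + \<epsilon>))"

definition isometric_action :: "(int ^ 'n \<Rightarrow> 'x::metric_space \<Rightarrow> 'x) \<Rightarrow> bool" where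
  "isometric_action act \<longleftrightarrow> (\<forall>x. act 0 x = x) \<and> (\<forall>g h x. act (g + h) x = act g (act h x))
     \<and> (\<forall>g x y. dist (act g x) (act g y) = dist x y)"

definition free_action :: "(int ^ 'n \<Rightarrow> 'x \<Rightarrow> 'x) \<Rightarrow> bool" where
  "free_action act \<longleftrightarrow> (\<forall>g x. act g x = x \<longrightarrow> g = 0)"

definition properly_discontinuous :: "(int ^ 'n \<Rightarrow> 'x::topological_space \<Rightarrow> 'x) \<Rightarrow> bool" where
  "properly_discontinuous act \<longleftrightarrow> (\<forall>K. compact K \<longrightarrow> finite {g. act g ` K \<inter> K \<noteq> {}})"

definition cocompact :: "(int ^ 'n \<Rightarrow> 'x::topological_space \<Rightarrow> 'x) \<Rightarrow> bool" where
  "cocompact act \<longleftrightarrow> (\<exists>K. compact K \<and> (\<Union>g. act g ` K) = UNIV)"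

text \<open>D bounds the diameter of the quotient metric d(Gx,Gy) = inf_g d(x, g y).\<close>
definition quotient_diam_le :: "(int ^ 'n \<Rightarrow> 'x::metric_space \<Rightarrow> 'x) \<Rightarrow> real \<Rightarrow> bool" where
  "quotient_diam_le act D \<longleftrightarrow> (\<forall>x y. (INF g. dist x (act g y)) \<le> D)"

end

theory Submission
  imports Defs
begin

text \<open>
  Let \<open>rep g \<in> S\<close> be the representative of the coset of \<open>g\<close>. A \<open>\<Sigma>\<^sub>D\<close>-word for
  \<open>\<gamma> \<in> Z\<close> is rewritten letter by letter: a letter \<open>x\<close> following the prefix \<open>p\<close> becomes
  \<open>rep p + x - rep (p + x)\<close>, which is \<open>0\<close> or a Schreier generator (or its inverse), and
  these telescope to \<open>\<gamma>\<close>; this gives the first inequality. For the second, in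
  \<open>\<Sigma>\<^sub>D\<close>-length \<open>|s\<^sub>i + \<sigma> - s\<^sub>j| \<le> |s\<^sub>i| + 1 + |s\<^sub>j|\<close>, and a representative of minimal
  length is shorter than the index: the prefixes of a geodesic word for it lie in distinct
  cosets, for cutting out the segment between two prefixes in the same coset would give a
  shorter element of its coset.

  The index is finite since \<open>n\<close> independent vectors span a lattice of full rank, which
  contains a multiple of every basis vector. \<open>\<Sigma>\<^sub>D\<close> generates \<open>\<Gamma>\<close> because a path from
  \<open>x\<^sub>0\<close> to \<open>\<gamma> x\<^sub>0\<close>, finely subdivided, shadows a chain of orbit points whose consecutive
  members are less than \<open>3D\<close> apart.
\<close>

section \<open>Word length\<close>

definition generates :: "('a::group_add) set \<Rightarrow> bool" where
  "generates \<Sigma> \<longleftrightarrow> (\<forall>g. \<exists>xs. set xs \<subseteq> \<Sigma> \<union> uminus ` \<Sigma> \<and> sum_list xs = g)"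

lemma word_length_le:
  assumes "set xs \<subseteq> \<Sigma> \<union> uminus ` \<Sigma>" and "sum_list xs = g"
  shows "word_length \<Sigma> g \<le> length xs"
  unfolding word_length_def by (rule Least_le) (use assms in auto)

lemma shortest_word:
  assumes "set xs \<subseteq> \<Sigma> \<union> uminus ` \<Sigma>" and "sum_list xs = g"
  obtains ys where "length ys = word_length \<Sigma> g" and "set ys \<subseteq> \<Sigma> \<union> uminus ` \<Sigma>" and "sum_list ys = g"
proof -
  have "\<exists>ys. length ys = word_length \<Sigma> g \<and> set ys \<subseteq> \<Sigma> \<union> uminus ` \<Sigma> \<and> sum_list ys = g"
    unfolding word_length_def by (rule LeastI_ex) (use assms in auto)
  then show ?thesis using that by blast
qed

lemma sum_list_rev_map_uminus:
  "sum_list (rev (map uminus xs)) = - sum_list (xs :: 'a::group_add list)"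
  by (induction xs) (simp_all add: minus_add)

lemma word_length_uminus: "word_length \<Sigma> (- g) = word_length \<Sigma> (g::'a::group_add)"
proof -
  let ?T = "\<Sigma> \<union> uminus ` \<Sigma>"
  have inverse_word: "length (rev (map uminus xs)) = length xs \<and> set (rev (map uminus xs)) \<subseteq> ?T
      \<and> sum_list (rev (map uminus xs)) = - sum_list xs" if "set xs \<subseteq> ?T" for xs
    using that by (auto simp: sum_list_rev_map_uminus)
  have "(\<exists>xs. length xs = k \<and> set xs \<subseteq> ?T \<and> sum_list xs = - g)
      \<longleftrightarrow> (\<exists>xs. length xs = k \<and> set xs \<subseteq> ?T \<and> sum_list xs = g)" for k
    by (metis inverse_word minus_minus)
  then show ?thesis unfolding word_length_def by simp
qed

text \<open>Without \<open>generates \<Sigma>\<close>, the \<open>LEAST\<close> defining \<open>word_length\<close> may range over an empty set.\<close>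

lemma word_length_add:
  assumes "generates \<Sigma>"
  shows "word_length \<Sigma> (a + b) \<le> word_length \<Sigma> a + word_length \<Sigma> b"
proof -
  obtain xs ys where xs: "length xs = word_length \<Sigma> a" "set xs \<subseteq> \<Sigma> \<union> uminus ` \<Sigma>" "sum_list xs = a"
    and ys: "length ys = word_length \<Sigma> b" "set ys \<subseteq> \<Sigma> \<union> uminus ` \<Sigma>" "sum_list ys = b"
    by (metis assms generates_def shortest_word)
  have "word_length \<Sigma> (a + b) \<le> length (xs @ ys)"
    by (rule word_length_le) (use xs ys in auto)
  then show ?thesis using xs ys by simp
qed

lemma word_length_sum_list:
  assumes "generates \<Sigma>"
  shows "word_length \<Sigma> (sum_list ys) \<le> (\<Sum>y\<leftarrow>ys. word_length \<Sigma> y)"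
proof (induction ys)
  case Nil
  show ?case using word_length_le[of "[]" \<Sigma> 0] by simp
next
  case (Cons y ys)
  then show ?case using word_length_add[OF assms, of y "sum_list ys"] by simp
qed

lemma word_length_le_mult_word_length:
  assumes "generates \<Sigma>" and bound: "\<And>h. h \<in> H \<Longrightarrow> word_length \<Sigma> h \<le> B"
    and "set ys \<subseteq> H \<union> uminus ` H" and "sum_list ys = g"
  shows "word_length \<Sigma> g \<le> B * word_length H g"
proof -
  obtain zs where zs: "length zs = word_length H g" "set zs \<subseteq> H \<union> uminus ` H" "sum_list zs = g"
    using shortest_word assms(3,4) by blast
  have "word_length \<Sigma> g \<le> (\<Sum>z\<leftarrow>zs. word_length \<Sigma> z)"
    using word_length_sum_list[OF assms(1)] zs(3) by blast
  also have "\<dots> \<le> (\<Sum>z\<leftarrow>zs. B)"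
    by (rule sum_list_mono) (use zs(2) bound in \<open>auto simp: word_length_uminus\<close>)
  finally show ?thesis using zs(1) by (simp add: sum_list_triv mult.commute)
qed

section \<open>Schreier generators of a finite-index subgroup\<close>

definition schreier_generators :: "'a::ab_group_add set \<Rightarrow> 'a set \<Rightarrow> 'a set \<Rightarrow> 'a set" where
  "schreier_generators S Z \<Sigma> =
     {si + \<sigma> - sj | si sj \<sigma>. si \<in> S \<and> sj \<in> S \<and> \<sigma> \<in> \<Sigma> \<and> si + \<sigma> - sj \<in> Z - {0}}"

lemma schreier_step:
  fixes Z S \<Sigma> :: "'a::ab_group_add set"
  assumes Z_diff: "\<And>a b. a \<in> Z \<Longrightarrow> b \<in> Z \<Longrightarrow> a - b \<in> Z"
    and rep: "\<And>g. rep g \<in> S \<and> g - rep g \<in> Z"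
    and x: "x \<in> \<Sigma> \<union> uminus ` \<Sigma>"
  defines "H \<equiv> schreier_generators S Z \<Sigma>"
  shows "rep a + x - rep (a + x) \<in> insert 0 (H \<union> uminus ` H)"
proof -
  define t where "t = rep a + x - rep (a + x)"
  have "t = (a + x - rep (a + x)) - (a - rep a)"
    unfolding t_def by (simp add: algebra_simps)
  then have tZ: "t \<in> Z" using Z_diff rep by metis
  have "t \<in> H \<union> uminus ` H" if "t \<noteq> 0"
    using x
  proof
    assume "x \<in> \<Sigma>"
    then show ?thesis using rep tZ \<open>t \<noteq> 0\<close> unfolding H_def schreier_generators_def t_def by blast
  next
    assume "x \<in> uminus ` \<Sigma>"
    then obtain \<tau> where \<tau>: "\<tau> \<in> \<Sigma>" "x = - \<tau>" by blast
    have "- t = rep (a + x) + \<tau> - rep a" unfolding t_def \<tau> by (simp add: algebra_simps)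
    moreover have "- t \<in> Z" using Z_diff[OF Z_diff[OF tZ tZ] tZ] by simp
    ultimately have "- t \<in> H"
      using rep \<tau>(1) \<open>t \<noteq> 0\<close> unfolding H_def schreier_generators_def by force
    then show ?thesis by (metis UnI2 image_eqI minus_minus)
  qed
  then show ?thesis unfolding t_def by blast
qed

lemma schreier_rewrite_word:
  fixes Z S \<Sigma> :: "'a::ab_group_add set"
  assumes Z_diff: "\<And>a b. a \<in> Z \<Longrightarrow> b \<in> Z \<Longrightarrow> a - b \<in> Z"
    and rep: "\<And>g. rep g \<in> S \<and> g - rep g \<in> Z"
    and "set xs \<subseteq> \<Sigma> \<union> uminus ` \<Sigma>"
  defines "H \<equiv> schreier_generators S Z \<Sigma>"
  shows "\<exists>ys. length ys \<le> length xs \<and> set ys \<subseteq> H \<union> uminus ` H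
           \<and> sum_list ys = rep a + sum_list xs - rep (a + sum_list xs)"
  using assms(3)
proof (induction xs arbitrary: a)
  case Nil
  then show ?case by auto
next
  case (Cons x xs)
  define t where "t = rep a + x - rep (a + x)"
  obtain ys where ys: "length ys \<le> length xs" "set ys \<subseteq> H \<union> uminus ` H"
      "sum_list ys = rep (a + x) + sum_list xs - rep (a + x + sum_list xs)"
    using Cons.IH[of "a + x"] Cons.prems by auto
  have sum: "t + sum_list ys = rep a + sum_list (x # xs) - rep (a + sum_list (x # xs))"
    using ys(3) unfolding t_def by (simp add: algebra_simps)
  have "t \<in> insert 0 (H \<union> uminus ` H)"
    unfolding t_def H_def by (rule schreier_step[OF Z_diff rep]) (use Cons.prems in auto)
  then consider "t = 0" | "t \<in> H \<union> uminus ` H" by blast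
  then show ?case
  proof cases
    case 1
    then show ?thesis using ys sum by (intro exI[of _ ys]) auto
  next
    case 2
    then show ?thesis using ys sum by (intro exI[of _ "t # ys"]) auto
  qed
qed

lemma word_length_less_card_cosets_if_minimal:
  fixes Z \<Sigma> :: "'a::ab_group_add set"
  assumes Z0: "0 \<in> Z" and Z_diff: "\<And>a b. a \<in> Z \<Longrightarrow> b \<in> Z \<Longrightarrow> a - b \<in> Z"
    and fin: "finite {(\<lambda>z. g + z) ` Z | g. True}"
    and "generates \<Sigma>"
    and minimal: "\<And>g. g - s \<in> Z \<Longrightarrow> word_length \<Sigma> s \<le> word_length \<Sigma> g"
  shows "word_length \<Sigma> s < card {(\<lambda>z. g + z) ` Z | g. True}"
proof -
  let ?L = "word_length \<Sigma> s"
  obtain xs where xs: "length xs = ?L" "set xs \<subseteq> \<Sigma> \<union> uminus ` \<Sigma>" "sum_list xs = s"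
    by (metis assms(4) generates_def shortest_word)
  define coset where "coset j = (\<lambda>z. sum_list (take j xs) + z) ` Z" for j
  have "coset i \<noteq> coset j" if ij: "i < j" "j \<le> ?L" for i j
  proof
    assume "coset i = coset j"
    moreover have "sum_list (take j xs) \<in> coset j" unfolding coset_def using Z0 by force
    ultimately obtain z where z: "z \<in> Z" "sum_list (take j xs) = sum_list (take i xs) + z"
      unfolding coset_def by auto
    define ws where "ws = take i xs @ drop j xs"
    have "s = sum_list (take i xs) + z + sum_list (drop j xs)"
      using xs(3) z(2) by (metis append_take_drop_id sum_list_append)
    then have "sum_list ws - s = 0 - z"
      unfolding ws_def by (simp add: algebra_simps)
    then have "sum_list ws - s \<in> Z" using Z_diff[OF Z0 z(1)] by simp
    then have "?L \<le> word_length \<Sigma> (sum_list ws)" by (rule minimal)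
    also have "\<dots> \<le> length ws"
      by (rule word_length_le) (use xs(2) in \<open>auto simp: ws_def dest: in_set_takeD in_set_dropD\<close>)
    also have "\<dots> < ?L" unfolding ws_def using ij xs(1) by auto
    finally show False by simp
  qed
  then have "inj_on coset {0..?L}"
    by (metis atLeastAtMost_iff inj_onI linorder_neqE_nat)
  moreover have "coset ` {0..?L} \<subseteq> {(\<lambda>z. g + z) ` Z | g. True}" unfolding coset_def by auto
  ultimately have "card {0..?L} \<le> card {(\<lambda>z. g + z) ` Z | g. True}"
    using card_inj_on_le fin by blast
  then show ?thesis by simp
qed

lemma word_length_schreier_generator:
  assumes "generates \<Sigma>" and S_bound: "\<And>s. s \<in> S \<Longrightarrow> word_length \<Sigma> s \<le> B"
    and "h \<in> schreier_generators S Z \<Sigma>"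
  shows "word_length \<Sigma> h \<le> 2 * B + 1"
proof -
  obtain si sj \<sigma> where h: "h = si + \<sigma> + - sj" "si \<in> S" "sj \<in> S" "\<sigma> \<in> \<Sigma>"
    using assms(3) unfolding schreier_generators_def by auto
  have "word_length \<Sigma> h \<le> word_length \<Sigma> si + word_length \<Sigma> \<sigma> + word_length \<Sigma> sj"
    using word_length_add[OF assms(1), of "si + \<sigma>" "- sj"] word_length_add[OF assms(1), of si \<sigma>]
    unfolding h(1) word_length_uminus[of \<Sigma> sj] by linarith
  moreover have "word_length \<Sigma> \<sigma> \<le> 1"
    using word_length_le[of "[\<sigma>]" \<Sigma> \<sigma>] h(4) by simp
  ultimately show ?thesis using S_bound[OF h(2)] S_bound[OF h(3)] by linarith
qed

lemma schreier_word_length_bounds: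
  fixes \<Sigma> Z S :: "'a::ab_group_add set"
  assumes gen: "generates \<Sigma>"
    and Z0: "0 \<in> Z" and Z_diff: "\<And>a b. a \<in> Z \<Longrightarrow> b \<in> Z \<Longrightarrow> a - b \<in> Z"
    and fin: "finite {(\<lambda>z. g + z) ` Z | g. True}"
    and S0: "0 \<in> S" and transversal: "\<And>g. \<exists>!s. s \<in> S \<and> g - s \<in> Z"
    and minimal: "\<And>s g. s \<in> S \<Longrightarrow> g - s \<in> Z \<Longrightarrow> word_length \<Sigma> s \<le> word_length \<Sigma> g"
    and "\<gamma> \<in> Z"
  defines "H \<equiv> schreier_generators S Z \<Sigma>" and "I \<equiv> card {(\<lambda>z. g + z) ` Z | g. True}"
  shows "word_length H \<gamma> \<le> word_length \<Sigma> \<gamma>"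
    and "word_length \<Sigma> \<gamma> \<le> (2 * I + 1) * word_length H \<gamma>"
proof -
  define rep where "rep g = (THE s. s \<in> S \<and> g - s \<in> Z)" for g
  have rep: "rep g \<in> S \<and> g - rep g \<in> Z" for g
    unfolding rep_def by (rule theI') (rule transversal)
  have rep_Z: "rep g = 0" if "g \<in> Z" for g
    unfolding rep_def by (rule the1_equality[OF transversal]) (use S0 that in simp)
  obtain xs where xs: "length xs = word_length \<Sigma> \<gamma>" "set xs \<subseteq> \<Sigma> \<union> uminus ` \<Sigma>" "sum_list xs = \<gamma>"
    by (metis gen generates_def shortest_word)
  obtain ys where ys: "length ys \<le> length xs" "set ys \<subseteq> H \<union> uminus ` H" "sum_list ys = \<gamma>"
    using schreier_rewrite_word[OF Z_diff rep xs(2), of 0] rep_Z[OF Z0] rep_Z[OF \<open>\<gamma> \<in> Z\<close>] xs(3)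
    unfolding H_def by auto
  show "word_length H \<gamma> \<le> word_length \<Sigma> \<gamma>"
    using word_length_le[OF ys(2,3)] ys(1) xs(1) by simp
  have "word_length \<Sigma> s \<le> I" if "s \<in> S" for s
    using word_length_less_card_cosets_if_minimal[OF Z0 Z_diff fin gen minimal[OF that]]
    unfolding I_def by simp
  then show "word_length \<Sigma> \<gamma> \<le> (2 * I + 1) * word_length H \<gamma>"
    using word_length_le_mult_word_length[OF gen _ ys(2,3)] word_length_schreier_generator[OF gen]
    unfolding H_def by blast
qed

section \<open>Full-rank sublattices have finite index\<close>

lemma int_span_0: "0 \<in> int_span V"
  unfolding int_span_def by (rule CollectI, rule exI[of _ "\<lambda>_. 0"]) auto

lemma int_span_add: "a \<in> int_span V \<Longrightarrow> b \<in> int_span V \<Longrightarrow> a + b \<in> int_span V"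
proof -
  assume "a \<in> int_span V" "b \<in> int_span V"
  then obtain c1 c2 where "a = (\<Sum>v\<in>V. c1 v *s v)" "b = (\<Sum>v\<in>V. c2 v *s v)"
    unfolding int_span_def by auto
  then have "a + b = (\<Sum>v\<in>V. (c1 v + c2 v) *s v)"
    by (simp add: sum.distrib vector_sadd_rdistrib)
  then show ?thesis unfolding int_span_def by (auto intro!: exI[of _ "\<lambda>v. c1 v + c2 v"])
qed

lemma int_span_smult: "a \<in> int_span V \<Longrightarrow> k *s a \<in> int_span V"
proof -
  assume "a \<in> int_span V"
  then obtain c where "a = (\<Sum>v\<in>V. c v *s v)" unfolding int_span_def by auto
  then have "k *s a = (\<Sum>v\<in>V. (k * c v) *s v)"
    by (simp add: vec_eq_iff sum_distrib_left mult.assoc)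
  then show ?thesis unfolding int_span_def by (auto intro!: exI[of _ "\<lambda>v. k * c v"])
qed

lemma int_span_diff: "a \<in> int_span V \<Longrightarrow> b \<in> int_span V \<Longrightarrow> a - b \<in> int_span V"
  using int_span_add int_span_smult[of b V "-1"] by (metis diff_conv_add_uminus vector_sneg_minus1)

lemma int_span_sum: "finite A \<Longrightarrow> (\<And>k. k \<in> A \<Longrightarrow> f k \<in> int_span V) \<Longrightarrow> sum f A \<in> int_span V"
  by (induction A rule: finite_induct) (auto intro: int_span_add int_span_0)

lemma int_span_coset_eq:
  assumes "g - r \<in> int_span V"
  shows "(\<lambda>z. g + z) ` int_span V = (\<lambda>z. r + z) ` int_span V"
proof (intro equalityI image_subsetI)
  fix z assume "z \<in> int_span V"
  then show "g + z \<in> (\<lambda>z. r + z) ` int_span V"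
    using int_span_add[OF assms] by (intro image_eqI[of _ _ "(g - r) + z"]) simp_all
next
  fix z assume "z \<in> int_span V"
  then show "r + z \<in> (\<lambda>z. g + z) ` int_span V"
    using int_span_diff[OF _ assms] by (intro image_eqI[of _ _ "z - (g - r)"]) simp_all
qed

lemma rat_clear_denominators:
  fixes c :: "'a \<Rightarrow> rat"
  assumes "finite V"
  shows "\<exists>M::int. M > 0 \<and> (\<exists>d. \<forall>v\<in>V. of_int M * c v = of_int (d v))"
  using assms
proof (induction V rule: finite_induct)
  case empty
  show ?case by (intro exI[of _ 1]) auto
next
  case (insert y V)
  then obtain M d where M: "M > 0" "\<forall>v\<in>V. of_int M * c v = of_int (d v)" by blast
  obtain p q where pq: "quotient_of (c y) = (p, q)" by (cases "quotient_of (c y)")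
  have q: "q > 0" using quotient_of_denom_pos[OF pq] .
  then have y: "of_int q * c y = of_int p" using quotient_of_div[OF pq] by simp
  define d' where "d' v = (if v = y then M * p else q * d v)" for v
  have "of_int (M * q) * c v = of_int (d' v)" if "v \<in> insert y V" for v
    using that M(2) y unfolding d'_def by (auto simp: algebra_simps)
  then show ?case using M(1) q by (intro exI[of _ "M * q"]) auto
qed

definition rat_vec :: "int ^ 'n \<Rightarrow> rat ^ 'n" where
  "rat_vec v = (\<chi> i. of_int (v $ i))"

lemma inj_rat_vec: "inj rat_vec"
  by (rule injI) (simp add: rat_vec_def vec_eq_iff)

lemma rat_vec_lincomb:
  "rat_vec (\<Sum>v\<in>V. c v *s v) = (\<Sum>v\<in>V. of_int (c v) *s rat_vec v)"
  by (induction V rule: infinite_finite_induct) (simp_all add: rat_vec_def vec_eq_iff)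

lemma sum_rat_vec_image:
  "(\<Sum>w\<in>rat_vec ` V. u w *s w) = (\<Sum>v\<in>V. u (rat_vec v) *s rat_vec v)"
  by (rule sum.reindex[OF inj_on_subset[OF inj_rat_vec subset_UNIV], unfolded o_def])

lemma rat_combination_of_rat_vecs:
  fixes V :: "(int ^ 'n) set"
  assumes "finite V"
  obtains M :: int and d where "M > 0"
    and "of_int M *s (\<Sum>v\<in>V. u v *s rat_vec v) = rat_vec (\<Sum>v\<in>V. d v *s v)"
    and "\<And>v. v \<in> V \<Longrightarrow> of_int M * u v = of_int (d v)"
proof -
  obtain M d where M: "M > 0" "\<forall>v\<in>V. of_int M * u v = of_int (d v)"
    using rat_clear_denominators[OF assms] by blast
  have "of_int M *s (\<Sum>v\<in>V. u v *s rat_vec v) = (\<Sum>v\<in>V. (of_int M * u v) *s rat_vec v)"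
    by (simp add: vec_eq_iff sum_distrib_left mult.assoc)
  also have "\<dots> = rat_vec (\<Sum>v\<in>V. d v *s v)"
    using M(2) by (simp add: rat_vec_lincomb)
  finally show ?thesis using that M by blast
qed

lemma int_lin_indep_rat_independent:
  assumes "finite V" and "int_lin_indep V"
  shows "vec.independent (rat_vec ` V)"
  unfolding vec.independent_explicit
proof (intro conjI allI impI ballI)
  show "finite (rat_vec ` V)" using assms(1) by simp
  fix c w assume c: "(\<Sum>v\<in>rat_vec ` V. c v *s v) = 0" and w: "w \<in> rat_vec ` V"
  obtain M d where M: "M > 0" "of_int M *s (\<Sum>v\<in>V. c (rat_vec v) *s rat_vec v) = rat_vec (\<Sum>v\<in>V. d v *s v)"
      "\<And>v. v \<in> V \<Longrightarrow> of_int M * c (rat_vec v) = of_int (d v)"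
    using rat_combination_of_rat_vecs[OF assms(1), where u = "\<lambda>v. c (rat_vec v)"] by blast
  have "rat_vec (\<Sum>v\<in>V. d v *s v) = of_int M *s 0"
    using c M(2) by (simp add: sum_rat_vec_image)
  also have "\<dots> = rat_vec 0" by (simp add: rat_vec_def vec_eq_iff)
  finally have "rat_vec (\<Sum>v\<in>V. d v *s v) = rat_vec 0" .
  then have "\<forall>v\<in>V. d v = 0"
    using assms(2) injD[OF inj_rat_vec] unfolding int_lin_indep_def by blast
  then show "c w = 0" using w M(1,3) by fastforce
qed

lemma full_rank_int_span_contains_multiple:
  fixes V :: "(int ^ 'n) set"
  assumes card: "card V = CARD('n)" and indep: "int_lin_indep V"
  shows "\<exists>M>0. M *s w \<in> int_span V"
proof -
  have finV: "finite V" using card card.infinite by fastforce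
  have "card (rat_vec ` V) = CARD('n)"
    using card by (simp add: card_image[OF inj_on_subset[OF inj_rat_vec subset_UNIV]])
  moreover have "vec.dim (UNIV :: (rat ^ 'n) set) = CARD('n)" by (rule vec_dim_card)
  ultimately have "UNIV \<subseteq> vec.span (rat_vec ` V)"
    using vec.card_eq_dim[of "rat_vec ` V" UNIV] finV
      int_lin_indep_rat_independent[OF finV indep] by simp
  then obtain u where "rat_vec w = (\<Sum>v\<in>V. u (rat_vec v) *s rat_vec v)"
    using vec.span_finite[of "rat_vec ` V"] finV by (auto simp: sum_rat_vec_image)
  moreover obtain M d where "M > 0"
    "of_int M *s (\<Sum>v\<in>V. u (rat_vec v) *s rat_vec v) = rat_vec (\<Sum>v\<in>V. d v *s v)"
    using rat_combination_of_rat_vecs[OF finV, where u = "\<lambda>v. u (rat_vec v)"] by blast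
  ultimately have "M > 0" "rat_vec (M *s w) = rat_vec (\<Sum>v\<in>V. d v *s v)"
    by (simp_all add: rat_vec_def vec_eq_iff)
  then show ?thesis using injD[OF inj_rat_vec] unfolding int_span_def by blast
qed

lemma finite_cosets_full_rank_int_span:
  fixes V :: "(int ^ 'n) set"
  assumes "card V = CARD('n)" and "int_lin_indep V"
  shows "finite {(\<lambda>z. g + z) ` int_span V | g. True}"
proof -
  have "\<forall>k. \<exists>m>0. m *s axis k 1 \<in> int_span V"
    using full_rank_int_span_contains_multiple[OF assms] by blast
  then obtain M where "\<forall>k. M k > 0 \<and> M k *s axis k 1 \<in> int_span V"
    by (rule choice[THEN exE])
  then have M_pos: "\<And>k. M k > 0" and M_axis: "\<And>k. M k *s axis k 1 \<in> int_span V" by simp_all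
  define R where "R = {r :: int ^ 'n. \<forall>i. r $ i \<in> {0..<M i}}"
  have "R \<subseteq> vec_lambda ` (PiE UNIV (\<lambda>i. {0..<M i}))"
  proof
    fix r assume "r \<in> R"
    then have "(\<lambda>i. r $ i) \<in> PiE UNIV (\<lambda>i. {0..<M i})" unfolding R_def by auto
    then show "r \<in> vec_lambda ` (PiE UNIV (\<lambda>i. {0..<M i}))"
      by (intro image_eqI[of _ _ "\<lambda>i. r $ i"]) simp_all
  qed
  then have "finite R" by (rule finite_subset) (intro finite_imageI finite_PiE; simp)
  have "{(\<lambda>z. g + z) ` int_span V | g. True} \<subseteq> (\<lambda>r. (\<lambda>z. r + z) ` int_span V) ` R"
  proof clarify
    fix g :: "int ^ 'n"
    define r where "r = (\<chi> i. g $ i mod M i)"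
    have "g - r = (\<Sum>k\<in>UNIV. (g $ k div M k) *s (M k *s axis k 1))"
      unfolding r_def by (simp add: vec_eq_iff axis_def minus_mod_eq_mult_div if_distrib cong: if_cong)
    also have "\<dots> \<in> int_span V" by (intro int_span_sum finite int_span_smult[OF M_axis])
    finally have "(\<lambda>z. g + z) ` int_span V = (\<lambda>z. r + z) ` int_span V" by (rule int_span_coset_eq)
    moreover have "r \<in> R" unfolding R_def r_def using M_pos by simp
    ultimately show "(\<lambda>z. g + z) ` int_span V \<in> (\<lambda>r. (\<lambda>z. r + z) ` int_span V) ` R" by blast
  qed
  then show ?thesis using \<open>finite R\<close> finite_subset by blast
qed

section \<open>Generation by the orbit displacement set\<close>

lemma quotient_diam_le_near_orbit:
  assumes "quotient_diam_le act D" and "D < E"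
  shows "\<exists>g. dist x (act g y) < E"
proof -
  have "(INF g. dist x (act g y)) < E"
    using assms unfolding quotient_diam_le_def by (meson le_less_trans)
  moreover have "bdd_below (range (\<lambda>g. dist x (act g y)))"
    by (rule bdd_belowI2[of _ 0]) simp
  ultimately show ?thesis by (simp add: cINF_less_iff)
qed

lemma orbit_chain:
  fixes act :: "int ^ 'n \<Rightarrow> 'x::metric_space \<Rightarrow> 'x"
  assumes "length_space TYPE('x)" and "quotient_diam_le act D" and "D > 0"
    and act0: "act 0 x0 = x0"
  obtains N g where "g 0 = 0" and "g N = \<gamma>"
    and "\<And>i. i < N \<Longrightarrow> dist (act (g i) x0) (act (g (Suc i)) x0) < 3 * D"
proof -
  obtain p :: "real \<Rightarrow> 'x" where p: "continuous_on {0..1} p" "p 0 = x0" "p 1 = act \<gamma> x0"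
    using assms(1) unfolding length_space_def by (metis zero_less_one)
  then have "uniformly_continuous_on {0..1} p" using compact_uniformly_continuous by blast
  then obtain \<delta> where \<delta>: "\<delta> > 0"
      "\<And>s t. s \<in> {0..1} \<Longrightarrow> t \<in> {0..1} \<Longrightarrow> dist t s < \<delta> \<Longrightarrow> dist (p t) (p s) < D / 3"
    unfolding uniformly_continuous_on_def using \<open>D > 0\<close> by (metis divide_pos_pos zero_less_numeral)
  obtain N :: nat where N: "N > 0" "inverse (real N) < \<delta>"
    using ex_inverse_of_nat_less[OF \<delta>(1)] by auto
  define q where "q i = p (real i / real N)" for i
  \<comment> \<open>\<open>4D/3 + D/3 + 4D/3 = 3D\<close>\<close>
  have "D < 4 * D / 3" using \<open>D > 0\<close> by simp
  then have "\<forall>i. \<exists>h. dist (q i) (act h x0) < 4 * D / 3"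
    using quotient_diam_le_near_orbit[OF assms(2)] by blast
  then obtain g0 where g0: "\<And>i. dist (q i) (act (g0 i) x0) < 4 * D / 3" by metis
  define g where "g i = (if i = 0 then 0 else if i = N then \<gamma> else g0 i)" for i
  have near: "dist (q i) (act (g i) x0) < 4 * D / 3" for i
    using g0[of i] \<open>D > 0\<close> N(1) p(2,3) act0 unfolding g_def q_def by auto
  have "dist (act (g i) x0) (act (g (Suc i)) x0) < 3 * D" if "i < N" for i
  proof -
    have "dist (real (Suc i) / real N) (real i / real N) < \<delta>"
      using N by (simp add: dist_real_def diff_divide_distrib[symmetric] divide_inverse algebra_simps)
    then have "dist (q (Suc i)) (q i) < D / 3"
      unfolding q_def using \<delta>(2) that by auto
    then show ?thesis
      using near[of i] near[of "Suc i"] dist_triangle[of "act (g i) x0" "act (g (Suc i)) x0" "q i"]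
        dist_triangle[of "q i" "act (g (Suc i)) x0" "q (Suc i)"]
      by (simp add: dist_commute)
  qed
  moreover have "g 0 = 0" "g N = \<gamma>" using N(1) unfolding g_def by simp_all
  ultimately show ?thesis using that by blast
qed

lemma isometric_action_generates:
  fixes act :: "int ^ 'n \<Rightarrow> 'x::metric_space \<Rightarrow> 'x"
  assumes "length_space TYPE('x)" and iso: "isometric_action act"
    and "quotient_diam_le act D" and "D > 0"
  shows "generates {g. g \<noteq> 0 \<and> dist (act g x0) x0 \<le> 3 * D}"
  unfolding generates_def
proof
  fix \<gamma> :: "int ^ 'n"
  have act_add: "act (g + h) x = act g (act h x)" and act_dist: "dist (act g x) (act g y) = dist x y"
    for g h x y using iso unfolding isometric_action_def by blast+
  obtain N g where g: "g 0 = 0" "g N = \<gamma>"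
    "\<And>i. i < N \<Longrightarrow> dist (act (g i) x0) (act (g (Suc i)) x0) < 3 * D"
    using orbit_chain[OF assms(1,3,4)] iso unfolding isometric_action_def by metis
  define steps where "steps = map (\<lambda>i. g (Suc i) - g i) [0..<N]"
  have "dist (act s x0) x0 \<le> 3 * D" if s: "s \<in> set steps" for s
  proof -
    obtain i where i: "i < N" "s = g (Suc i) - g i" using s unfolding steps_def by auto
    have "dist (act s x0) x0 = dist (act (g (Suc i)) x0) (act (g i) x0)"
      using act_dist[of "g i" "act s x0" x0] unfolding i(2) act_add[symmetric] by simp
    then show ?thesis using g(3)[OF i(1)] by (simp add: dist_commute)
  qed
  moreover have "sum_list (filter (\<lambda>s. s \<noteq> 0) steps) = \<gamma>"
  proof -
    have "sum_list (filter (\<lambda>s. s \<noteq> 0) steps) = sum_list steps"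
      by (induction steps) auto
    also have "\<dots> = (\<Sum>i<N. g (Suc i) - g i)"
      unfolding steps_def by (simp add: sum_list_sum_nth atLeast0LessThan)
    also have "\<dots> = \<gamma>" using g(1,2) by (simp add: sum_lessThan_telescope)
    finally show ?thesis .
  qed
  ultimately show "\<exists>xs. set xs \<subseteq> {g. g \<noteq> 0 \<and> dist (act g x0) x0 \<le> 3 * D}
      \<union> uminus ` {g. g \<noteq> 0 \<and> dist (act g x0) x0 \<le> 3 * D} \<and> sum_list xs = \<gamma>"
    by (intro exI[of _ "filter (\<lambda>s. s \<noteq> 0) steps"]) auto
qed

theorem lemma2p2:
  fixes act :: "int ^ 'n \<Rightarrow> 'x::metric_space \<Rightarrow> 'x"
    and x0 :: 'x and D :: real
    and \<Sigma>n S :: "(int ^ 'n) set"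
  assumes "length_space TYPE('x)"
    and "isometric_action act" and "free_action act"
    and "properly_discontinuous act" and "cocompact act"
    and "quotient_diam_le act D"
  defines "\<Sigma>D \<equiv> {g. g \<noteq> 0 \<and> dist (act g x0) x0 \<le> 3 * D}"
  assumes "\<Sigma>n \<subseteq> \<Sigma>D" and "card \<Sigma>n = CARD('n)" and "int_lin_indep \<Sigma>n"
  defines "Z \<equiv> int_span \<Sigma>n"
  assumes "0 \<in> S"
    and "\<forall>g. \<exists>!s. s \<in> S \<and> g - s \<in> Z"
    and "\<forall>s\<in>S. \<forall>g. g - s \<in> Z \<longrightarrow> word_length \<Sigma>D s \<le> word_length \<Sigma>D g"
  defines "\<Sigma>hat \<equiv> {si + \<sigma> - sj | si sj \<sigma>. si \<in> S \<and> sj \<in> S \<and> \<sigma> \<in> \<Sigma>D \<and> si + \<sigma> - sj \<in> Z - {0}}"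
  shows "\<forall>\<gamma>\<in>Z. word_length \<Sigma>hat \<gamma> \<le> word_length \<Sigma>D \<gamma> \<and>
           real (word_length \<Sigma>D \<gamma>) \<le> (2 * real (group_index Z) + 1) * real (word_length \<Sigma>hat \<gamma>)"
proof
  fix \<gamma> assume "\<gamma> \<in> Z"
  \<comment> \<open>Freeness only serves to make \<open>D\<close> positive.\<close>
  have "card \<Sigma>n > 0" using assms(9) by simp
  then obtain v where "v \<in> \<Sigma>n" by (auto simp: card_gt_0_iff)
  then have v: "v \<noteq> 0" "dist (act v x0) x0 \<le> 3 * D" using assms(8) unfolding \<Sigma>D_def by auto
  then have "act v x0 \<noteq> x0" using assms(3) unfolding free_action_def by blast
  then have "D > 0" using v(2) zero_less_dist_iff[of "act v x0" x0] by linarith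
  then have gen: "generates \<Sigma>D"
    unfolding \<Sigma>D_def by (rule isometric_action_generates[OF assms(1,2,6)])
  have fin: "finite {(\<lambda>z. g + z) ` Z | g. True}"
    unfolding Z_def by (rule finite_cosets_full_rank_int_span[OF assms(9,10)])
  have Z0: "0 \<in> Z" and Z_diff: "\<And>a b. a \<in> Z \<Longrightarrow> b \<in> Z \<Longrightarrow> a - b \<in> Z"
    unfolding Z_def by (simp_all add: int_span_0 int_span_diff)
  have "schreier_generators S Z \<Sigma>D = \<Sigma>hat"
    unfolding \<Sigma>hat_def schreier_generators_def ..
  then have hat_le: "word_length \<Sigma>hat \<gamma> \<le> word_length \<Sigma>D \<gamma>"
    and le_hat: "word_length \<Sigma>D \<gamma> \<le> (2 * group_index Z + 1) * word_length \<Sigma>hat \<gamma>"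
    using schreier_word_length_bounds[OF gen Z0 Z_diff fin assms(12) assms(13)[rule_format]
        assms(14)[rule_format] \<open>\<gamma> \<in> Z\<close>]
    unfolding group_index_def by simp_all
  from le_hat have "real (word_length \<Sigma>D \<gamma>) \<le> real ((2 * group_index Z + 1) * word_length \<Sigma>hat \<gamma>)"
    by (rule of_nat_mono)
  with hat_le show "word_length \<Sigma>hat \<gamma> \<le> word_length \<Sigma>D \<gamma> \<and>
      real (word_length \<Sigma>D \<gamma>) \<le> (2 * real (group_index Z) + 1) * real (word_length \<Sigma>hat \<gamma>)"
    by (simp add: algebra_simps)
qed

end
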